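(* For any constants $z'\in[0,1]$ and $\alpha'>0$, the set $S_{z',\alpha'}=\{(x_1,\dots,x_n)\in[0,1]^n:\max_{i\in\mathcal V}|x_i-z'|<\alpha'\}$ is finite-time robustly reachable from $[0,1]^n$ under both control protocols (C1) and (C3).
   Context: Fix $n\ge3$, $\mathcal V=\{1,\dots,n\}$, confidence thresholds $r_i\in(0,1]$, belief factors $\omega_i\in(0,1)$, $\eta>0$. States $x(t)=(x_1(t),\dots,x_n(t))\in[0,1]^n$. Neighbor set $\mathcal N_i(t)=\{j:|x_j(t)-x_i(t)|\le r_i\}$ (contains $i$), $\Pi_{[0,1]}(y)=\min\{1,\max\{0,y\}\}$, $x_{\rm ave}(t)=\frac1n\sum_ix_i(t)$. Control protocol (C1): $x_i(t+1)=\Pi_{[0,1]}\big(|\mathcal N_i(t)|^{-1}\sum_{j\in\mathcal N_i(t)}x_j(t)+u_i(t)+b_i(t)\big)$. Control protocol (C3): $x_i(t+1)=\Pi_{[0,1]}\big(\omega_ix_{\rm ave}(t)+\frac{1-\omega_i}{|\mathcal N_i(t)|}\sum_{j\in\mathcal N_i(t)}x_j(t)+u_i(t)+b_i(t)\big)$. Here $\delta_i(t)\in(0,\eta)$ is a chosen parameter, $u_i(t)\in[-\eta+\delta_i(t),\eta-\delta_i(t)]$ a chosen control input, $b_i(t)\in[-\delta_i(t),\delta_i(t)]$ an arbitrary uncertainty; $\delta_i(t),u_i(t)$ may depend on $x(0),\dots,x(t)$. A set $S\subseteq[0,1]^n$ is finite-time robustly reachable from $[0,1]^n$ under a control protocol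 if there exist constants $T>0$ and $\varepsilon\in(0,\eta)$, independent of $x(0)$, such that for every $x(0)\in[0,1]^n$, either $x(0)\in S$, or one can choose $\delta_i(t)\in[\varepsilon,\eta)$ and $u_i(t)\in[-\eta+\delta_i(t),\eta-\delta_i(t)]$ for $i\in\mathcal V$, $0\le t<T$, guaranteeing that for arbitrary $b_i(t)\in[-\delta_i(t),\delta_i(t)]$ there is $t\in[1,T]$ with $x(t)\in S$. *)

theory Defs
  imports Complex_Main
begin

text \<open>Agents are indexed by V = {1..n}; a state is a function nat => real whose
 values at indices outside {1..n} are irrelevant.\<close>

type_synonym state = "nat \<Rightarrow> real"

definition cube :: "nat \<Rightarrow> state set" where
  "cube n = {x. \<forall>i\<in>{1..n}. 0 \<le> x i \<and> x i \<le> 1}"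

definition nbr :: "nat \<Rightarrow> (nat \<Rightarrow> real) \<Rightarrow> state \<Rightarrow> nat \<Rightarrow> nat set" where
  "nbr n r x i = {j\<in>{1..n}. \<bar>x j - x i\<bar> \<le> r i}"

definition nbr_avg :: "nat \<Rightarrow> (nat \<Rightarrow> real) \<Rightarrow> state \<Rightarrow> nat \<Rightarrow> real" where
  "nbr_avg n r x i = (\<Sum>j\<in>nbr n r x i. x j) / real (card (nbr n r x i))"

definition xave :: "nat \<Rightarrow> state \<Rightarrow> real" where
  "xave n x = (\<Sum>i\<in>{1..n}. x i) / real n"

text \<open>Unprojected, uncontrolled parts of protocols (C1) and (C3).\<close>
definition C1 :: "nat \<Rightarrow> (nat \<Rightarrow> real) \<Rightarrow> state \<Rightarrow> state" where
  "C1 n r x = (\<lambda>i. nbr_avg n r x i)"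

definition C3 :: "nat \<Rightarrow> (nat \<Rightarrow> real) \<Rightarrow> (nat \<Rightarrow> real) \<Rightarrow> state \<Rightarrow> state" where
  "C3 n r \<omega> x = (\<lambda>i. \<omega> i * xave n x + (1 - \<omega> i) * nbr_avg n r x i)"

definition proj01 :: "real \<Rightarrow> real" where
  "proj01 y = min 1 (max 0 y)"

definition step :: "(state \<Rightarrow> state) \<Rightarrow> state \<Rightarrow> state \<Rightarrow> state \<Rightarrow> state" where
  "step F x u b = (\<lambda>i. proj01 (F x i + u i + b i))"

text \<open>A strategy maps the history [x(0),...,x(t)] to the pair (delta(t), u(t)).
 The noise b t i is b_i(t).  hist F sigma b x0 t = [x(0),...,x(t)].\<close>
primrec hist :: "(state \<Rightarrow> state) \<Rightarrow> (state list \<Rightarrow> state \<times> state)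
    \<Rightarrow> (nat \<Rightarrow> state) \<Rightarrow> state \<Rightarrow> nat \<Rightarrow> state list" where
  "hist F \<sigma> b x0 0 = [x0]"
| "hist F \<sigma> b x0 (Suc t) =
     hist F \<sigma> b x0 t @ [step F (last (hist F \<sigma> b x0 t)) (snd (\<sigma> (hist F \<sigma> b x0 t))) (b t)]"

definition traj :: "(state \<Rightarrow> state) \<Rightarrow> (state list \<Rightarrow> state \<times> state)
    \<Rightarrow> (nat \<Rightarrow> state) \<Rightarrow> state \<Rightarrow> nat \<Rightarrow> state" where
  "traj F \<sigma> b x0 t = last (hist F \<sigma> b x0 t)"

definition robustly_reachable ::
    "nat \<Rightarrow> real \<Rightarrow> (state \<Rightarrow> state) \<Rightarrow> state set \<Rightarrow> bool" where
  "robustly_reachable n \<eta> F S \<longleftrightarrow>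
     (\<exists>T::nat. T > 0 \<and> (\<exists>\<epsilon>::real. 0 < \<epsilon> \<and> \<epsilon> < \<eta> \<and>
       (\<forall>x0\<in>cube n. x0 \<in> S \<or>
         (\<exists>\<sigma>. (\<forall>h. \<forall>i\<in>{1..n}. \<epsilon> \<le> fst (\<sigma> h) i \<and> fst (\<sigma> h) i < \<eta> \<and>
                  - \<eta> + fst (\<sigma> h) i \<le> snd (\<sigma> h) i \<and> snd (\<sigma> h) i \<le> \<eta> - fst (\<sigma> h) i) \<and>
              (\<forall>b. (\<forall>t<T. \<forall>i\<in>{1..n}. - fst (\<sigma> (hist F \<sigma> b x0 t)) i \<le> b t i \<and>
                                     b t i \<le> fst (\<sigma> (hist F \<sigma> b x0 t)) i)
                   \<longrightarrow> (\<exists>t\<in>{1..T}. traj F \<sigma> b x0 t \<in> S))))))"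

definition Sz :: "nat \<Rightarrow> real \<Rightarrow> real \<Rightarrow> state set" where
  "Sz n z \<alpha> = {x \<in> cube n. Max ((\<lambda>i. \<bar>x i - z\<bar>) ` {1..n}) < \<alpha>}"

end

theory Submission
  imports Defs
begin

text \<open>Both uncontrolled updates are convex combinations of the current opinions, so they never
  increase the largest distance of an opinion from the target z.  Hence the controller may simply
  push every agent towards z with the largest admissible input c = \<eta> - \<delta>: the noise of size \<delta>
  costs at most \<delta>, so the largest distance shrinks by c - \<delta> \<ge> \<eta>/2 per step until it is at
  most \<delta> < \<alpha>, which happens after a number of steps depending only on \<eta>.\<close>

definition nonexpanding_about :: "nat \<Rightarrow> real \<Rightarrow> (state \<Rightarrow> state) \<Rightarrow> bool" where
  "nonexpanding_about n z F \<longleftrightarrow>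
     (\<forall>x B. (\<forall>j\<in>{1..n}. \<bar>x j - z\<bar> \<le> B) \<longrightarrow> (\<forall>i\<in>{1..n}. \<bar>F x i - z\<bar> \<le> B))"

definition steer :: "real \<Rightarrow> real \<Rightarrow> real \<Rightarrow> (state \<Rightarrow> state) \<Rightarrow> state list \<Rightarrow> state \<times> state" where
  "steer z \<delta> c F h = ((\<lambda>i. \<delta>), (\<lambda>i. max (- c) (min c (z - F (last h) i))))"

lemma mean_dist_le:
  fixes x :: "nat \<Rightarrow> real"
  assumes "finite A" "A \<noteq> {}" "\<forall>j\<in>A. \<bar>x j - z\<bar> \<le> B"
  shows "\<bar>(\<Sum>j\<in>A. x j) / real (card A) - z\<bar> \<le> B"
proof -
  have card_pos: "real (card A) > 0" using assms by (simp add: card_gt_0_iff)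
  have "(\<Sum>j\<in>A. x j) \<le> (\<Sum>j\<in>A. z + B)" "(\<Sum>j\<in>A. z - B) \<le> (\<Sum>j\<in>A. x j)"
    using assms(3) by (auto intro!: sum_mono simp del: sum_constant simp: abs_le_iff)
  then have "(\<Sum>j\<in>A. x j) / real (card A) \<le> z + B" "z - B \<le> (\<Sum>j\<in>A. x j) / real (card A)"
    using card_pos by (simp_all add: divide_le_eq le_divide_eq mult.commute)
  then show ?thesis by (simp add: abs_le_iff)
qed

lemma nbr_avg_dist_le:
  assumes "0 < r i" "i \<in> {1..n}" "\<forall>j\<in>{1..n}. \<bar>x j - z\<bar> \<le> B"
  shows "\<bar>nbr_avg n r x i - z\<bar> \<le> B"
proof -
  have "i \<in> nbr n r x i" using assms(1,2) by (simp add: nbr_def)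
  moreover have "nbr n r x i \<subseteq> {1..n}" by (auto simp: nbr_def)
  ultimately show ?thesis unfolding nbr_avg_def using assms(3)
    by (intro mean_dist_le) (auto intro: finite_subset)
qed

lemma xave_dist_le:
  assumes "n \<ge> 1" "\<forall>j\<in>{1..n}. \<bar>x j - z\<bar> \<le> B"
  shows "\<bar>xave n x - z\<bar> \<le> B"
  using mean_dist_le[of "{1..n}" x z B] assms by (simp add: xave_def)

lemma C1_nonexpanding:
  assumes "\<forall>i\<in>{1..n}. 0 < r i"
  shows "nonexpanding_about n z (C1 n r)"
  using assms by (auto simp: nonexpanding_about_def C1_def intro: nbr_avg_dist_le)

lemma C3_nonexpanding:
  assumes "n \<ge> 1" "\<forall>i\<in>{1..n}. 0 < r i" "\<forall>i\<in>{1..n}. 0 \<le> \<omega> i \<and> \<omega> i \<le> 1"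
  shows "nonexpanding_about n z (C3 n r \<omega>)"
  unfolding nonexpanding_about_def
proof (intro allI impI ballI)
  fix x B i
  assume dist: "\<forall>j\<in>{1..n}. \<bar>x j - z\<bar> \<le> B" and i: "i \<in> {1..n}"
  have ave: "\<bar>xave n x - z\<bar> \<le> B" using xave_dist_le[OF assms(1) dist] .
  have avg: "\<bar>nbr_avg n r x i - z\<bar> \<le> B" using nbr_avg_dist_le assms(2) i dist by blast
  have w: "0 \<le> \<omega> i" "\<omega> i \<le> 1" using assms(3) i by auto
  have "C3 n r \<omega> x i - z = \<omega> i * (xave n x - z) + (1 - \<omega> i) * (nbr_avg n r x i - z)"
    by (simp add: C3_def algebra_simps)
  also have "\<bar>\<dots>\<bar> \<le> \<omega> i * B + (1 - \<omega> i) * B"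
    using ave avg w by (intro order_trans[OF abs_triangle_ineq] add_mono)
      (auto simp: abs_mult intro: mult_left_mono)
  finally show "\<bar>C3 n r \<omega> x i - z\<bar> \<le> B" by (simp add: algebra_simps)
qed

lemma proj01_clamped_step_dist_le:
  fixes y z b B c \<delta> :: real
  assumes "0 \<le> z" "z \<le> 1" "\<bar>y - z\<bar> \<le> B" "\<bar>b\<bar> \<le> \<delta>" "0 \<le> c"
  shows "\<bar>proj01 (y + max (- c) (min c (z - y)) + b) - z\<bar> \<le> max \<delta> (B - c + \<delta>)"
  using assms unfolding proj01_def by (auto simp: abs_le_iff max_def min_def)

lemma step_in_cube: "step F x u b \<in> cube n"
  by (simp add: step_def cube_def proj01_def)

lemma traj_Suc:
  "traj F \<sigma> b x0 (Suc t) = step F (traj F \<sigma> b x0 t) (snd (\<sigma> (hist F \<sigma> b x0 t))) (b t)"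
  by (simp add: traj_def)

lemma steer_step_dist_le:
  assumes F: "nonexpanding_about n z F" and z: "0 \<le> z" "z \<le> 1" and "0 \<le> c"
    and dist: "\<forall>j\<in>{1..n}. \<bar>traj F (steer z \<delta> c F) b x0 t j - z\<bar> \<le> B"
    and noise: "\<forall>i\<in>{1..n}. \<bar>b t i\<bar> \<le> \<delta>"
    and i: "i \<in> {1..n}"
  shows "\<bar>traj F (steer z \<delta> c F) b x0 (Suc t) i - z\<bar> \<le> max \<delta> (B - c + \<delta>)"
proof -
  let ?x = "traj F (steer z \<delta> c F) b x0 t"
  have "\<bar>F ?x i - z\<bar> \<le> B" using F dist i by (auto simp: nonexpanding_about_def)
  then show ?thesis
    using proj01_clamped_step_dist_le[OF z, of "F ?x i" B "b t i" \<delta> c] noise i \<open>0 \<le> c\<close>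
    by (simp add: traj_Suc step_def steer_def traj_def)
qed

lemma steer_traj_dist_le:
  assumes F: "nonexpanding_about n z F" and z: "0 \<le> z" "z \<le> 1" and "0 \<le> \<delta>" "\<delta> \<le> c"
    and x0: "x0 \<in> cube n"
    and noise: "\<forall>t<T. \<forall>i\<in>{1..n}. \<bar>b t i\<bar> \<le> \<delta>"
  shows "t \<le> T \<Longrightarrow> \<forall>i\<in>{1..n}.
           \<bar>traj F (steer z \<delta> c F) b x0 t i - z\<bar> \<le> max \<delta> (1 - real t * (c - \<delta>))"
proof (induction t)
  case 0
  then show ?case using x0 z by (auto simp: traj_def cube_def abs_le_iff)
next
  case (Suc t)
  show ?case
  proof
    fix i assume i: "i \<in> {1..n}"
    have "\<bar>traj F (steer z \<delta> c F) b x0 (Suc t) i - z\<bar>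
          \<le> max \<delta> (max \<delta> (1 - real t * (c - \<delta>)) - c + \<delta>)"
      using Suc noise i assms(4,5) by (intro steer_step_dist_le[OF F z]) auto
    also have "\<dots> \<le> max \<delta> (1 - real (Suc t) * (c - \<delta>))"
      using assms(5) by (simp add: max_def algebra_simps)
    finally show "\<bar>traj F (steer z \<delta> c F) b x0 (Suc t) i - z\<bar>
                  \<le> max \<delta> (1 - real (Suc t) * (c - \<delta>))" .
  qed
qed

lemma robustly_reachable_Sz_if_nonexpanding:
  assumes F: "nonexpanding_about n z F" and "n \<ge> 1" "\<eta> > 0" and z: "0 \<le> z" "z \<le> 1"
    and "\<alpha> > 0"
  shows "robustly_reachable n \<eta> F (Sz n z \<alpha>)"
proof -
  define \<delta> where "\<delta> = min (\<eta>/4) (\<alpha>/2)"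
  define c where "c = \<eta> - \<delta>"
  define T where "T = nat \<lceil>2/\<eta>\<rceil> + 1"
  have \<delta>: "0 < \<delta>" "\<delta> < \<eta>" "\<delta> < \<alpha>" "\<delta> \<le> c" "\<eta>/2 \<le> c - \<delta>"
    using assms by (auto simp: \<delta>_def c_def)
  have "2/\<eta> \<le> real T" by (simp add: T_def) linarith
  then have "2 \<le> real T * \<eta>" using \<open>\<eta> > 0\<close> by (simp add: divide_le_eq)
  then have T: "1 - real T * (c - \<delta>) \<le> 0"
    using \<delta>(5) \<open>\<eta> > 0\<close> mult_left_mono[OF \<delta>(5), of "real T"] by linarith
  have "\<exists>t\<in>{1..T}. traj F (steer z \<delta> c F) b x0 t \<in> Sz n z \<alpha>"
    if x0: "x0 \<in> cube n" and "\<forall>t<T. \<forall>i\<in>{1..n}. - \<delta> \<le> b t i \<and> b t i \<le> \<delta>" for x0 b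
  proof -
    have noise: "\<forall>t<T. \<forall>i\<in>{1..n}. \<bar>b t i\<bar> \<le> \<delta>" using that(2) by (force simp: abs_le_iff)
    have "\<forall>i\<in>{1..n}. \<bar>traj F (steer z \<delta> c F) b x0 T i - z\<bar> < \<alpha>"
    proof
      fix i assume "i \<in> {1..n}"
      then have "\<bar>traj F (steer z \<delta> c F) b x0 T i - z\<bar> \<le> max \<delta> (1 - real T * (c - \<delta>))"
        using steer_traj_dist_le[OF F z _ _ x0 noise, where t = T] \<delta> by auto
      then show "\<bar>traj F (steer z \<delta> c F) b x0 T i - z\<bar> < \<alpha>" using \<delta> T by simp
    qed
    moreover have "traj F (steer z \<delta> c F) b x0 T \<in> cube n"
      by (simp add: T_def traj_Suc step_in_cube)
    ultimately have "traj F (steer z \<delta> c F) b x0 T \<in> Sz n z \<alpha>"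
      using \<open>n \<ge> 1\<close> by (auto simp: Sz_def Max_less_iff)
    then show ?thesis by (intro bexI[of _ T]) (simp_all add: T_def)
  qed
  then show ?thesis
    unfolding robustly_reachable_def using \<delta>
    by (intro exI[of _ T] conjI exI[of _ \<delta>] ballI disjI2 exI[of _ "steer z \<delta> c F"])
      (auto simp: T_def steer_def c_def)
qed

theorem lemma2:
  fixes n :: nat and r \<omega> :: "nat \<Rightarrow> real" and \<eta> z \<alpha> :: real
  assumes "n \<ge> 3"
    and "\<forall>i\<in>{1..n}. 0 < r i \<and> r i \<le> 1"
    and "\<forall>i\<in>{1..n}. 0 < \<omega> i \<and> \<omega> i < 1"
    and "\<eta> > 0"
    and "0 \<le> z" and "z \<le> 1" and "\<alpha> > 0"
  shows "robustly_reachable n \<eta> (C1 n r) (Sz n z \<alpha>) \<and>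
         robustly_reachable n \<eta> (C3 n r \<omega>) (Sz n z \<alpha>)"
proof -
  have n: "n \<ge> 1" using assms(1) by simp
  have r: "\<forall>i\<in>{1..n}. 0 < r i" using assms(2) by auto
  have \<omega>: "\<forall>i\<in>{1..n}. 0 \<le> \<omega> i \<and> \<omega> i \<le> 1" using assms(3) by auto
  show ?thesis
    using robustly_reachable_Sz_if_nonexpanding[OF C1_nonexpanding[OF r] n assms(4-7)]
      robustly_reachable_Sz_if_nonexpanding[OF C3_nonexpanding[OF n r \<omega>] n assms(4-7)]
    by blast
qed

end
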